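(* Let $\xi$ be a random index and $\{\mu_\xi\}$ probability measures on $\mathbb{R}^d$ with $\mu_\xi\propto\exp(-V_\xi)$ such that for every $\xi$, $\log\mu_\xi$ is $L_1$-Lipschitz and $\nabla\log\mu_\xi$ is $L_2$-Lipschitz, and let $\mu\propto\exp(\mathbb{E}_\xi[\log\mu_\xi])$. Then for any probability measure $\pi_t$ on $\mathbb{R}^d$, $$\mathbb{E}_{\pi_t}\big[\mathrm{tr}^+(\nabla^2\log\mu)\big]\le dL_2,\qquad \sup_{\boldsymbol{x}}\|\nabla\cdot\Sigma_{\rm SGD}(\boldsymbol{x})\|\le4(d+1)L_1L_2,\qquad \sup_{\boldsymbol{x}}\lambda_{\max}(\Sigma_{\rm SGD}(\boldsymbol{x}))\le4L_1^2,$$ where $\Sigma_{\rm SGD}(\boldsymbol{x})=\mathbb{E}_\xi[(\nabla\log\mu_\xi(\boldsymbol{x})-\nabla\mathbb{E}_\xi[\log\mu_\xi(\boldsymbol{x})])(\nabla\log\mu_\xi(\boldsymbol{x})-\nabla\mathbb{E}_\xi[\log\mu_\xi(\boldsymbol{x})])^\top]$.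
   Context: $\mathrm{tr}^+(A)$ denotes the sum of the absolute values of the eigenvalues of a symmetric matrix $A$. For a matrix field $\Sigma$, $\nabla\cdot\Sigma$ is the vector field with $i$-th component $\sum_j\partial_j\Sigma_{ij}$, and $\|\cdot\|$ is the Euclidean norm. $\lambda_{\max}$ is the largest eigenvalue. $\log\mu$, $\log\mu_\xi$ denote log-densities. *)

theory Defs
  imports "HOL-Analysis.Analysis" "HOL-Probability.Probability"
          "HOL-Computational_Algebra.Polynomial"
begin

text \<open>Gradient of a scalar field on R^d (R^d = real^'n, d = CARD('n)):
  the i-th component is the partial derivative in direction e_i.\<close>
definition grad :: "(real^'n \<Rightarrow> real) \<Rightarrow> real^'n \<Rightarrow> real^'n" where
  "grad f x = (\<chi> i. frechet_derivative f (at x) (axis i 1))"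

definition hess :: "(real^'n \<Rightarrow> real) \<Rightarrow> real^'n \<Rightarrow> real^'n^'n" where
  "hess f x = (\<chi> i j. frechet_derivative (\<lambda>y. grad f y $ i) (at x) (axis j 1))"

definition mdiv :: "(real^'n \<Rightarrow> real^'n^'n) \<Rightarrow> real^'n \<Rightarrow> real^'n" where
  "mdiv S x = (\<chi> i. \<Sum>j\<in>UNIV. frechet_derivative (\<lambda>y. S y $ i $ j) (at x) (axis j 1))"

definition outer :: "real^'n \<Rightarrow> real^'n \<Rightarrow> real^'n^'n" where
  "outer u v = (\<chi> i j. u $ i * v $ j)"

definition charpoly :: "real^'n^'n \<Rightarrow> real poly" where
  "charpoly A = det (\<chi> i j. (if i = j then [:0, 1:] else 0) - [:A $ i $ j:])"

text \<open>tr^+(A): sum of absolute values of the eigenvalues (with algebraic multiplicity);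
  for symmetric real A all eigenvalues are real roots of the characteristic polynomial.\<close>
definition tr_plus :: "real^'n^'n \<Rightarrow> real" where
  "tr_plus A = (\<Sum>r\<in>{r. poly (charpoly A) r = 0}. real (order r (charpoly A)) * \<bar>r\<bar>)"

definition lambda_max :: "real^'n^'n \<Rightarrow> real" where
  "lambda_max A = Max {r. poly (charpoly A) r = 0}"

text \<open>log mu_xi for mu_xi proportional to exp(-V_xi) (normalised w.r.t. Lebesgue measure).\<close>
definition log_dens :: "(real^'n \<Rightarrow> real) \<Rightarrow> real^'n \<Rightarrow> real" where
  "log_dens V x = - V x - ln (integral\<^sup>L lborel (\<lambda>y. exp (- V y)))"

definition Elog :: "'i measure \<Rightarrow> ('i \<Rightarrow> real^'n \<Rightarrow> real) \<Rightarrow> real^'n \<Rightarrow> real" where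
  "Elog P V x = (\<integral>\<xi>. log_dens (V \<xi>) x \<partial>P)"

definition log_mu :: "'i measure \<Rightarrow> ('i \<Rightarrow> real^'n \<Rightarrow> real) \<Rightarrow> real^'n \<Rightarrow> real" where
  "log_mu P V x = Elog P V x - ln (integral\<^sup>L lborel (\<lambda>y. exp (Elog P V y)))"

definition Sigma_SGD :: "'i measure \<Rightarrow> ('i \<Rightarrow> real^'n \<Rightarrow> real) \<Rightarrow> real^'n \<Rightarrow> real^'n^'n" where
  "Sigma_SGD P V x = (\<integral>\<xi>. outer (grad (log_dens (V \<xi>)) x - grad (Elog P V) x)
                                   (grad (log_dens (V \<xi>)) x - grad (Elog P V) x) \<partial>P)"

end

theory Submission
  imports Defs
begin

text \<open>Write \<open>f\<^sub>\<xi> = log \<mu>\<^sub>\<xi>\<close>. Since the family is uniformly Lipschitz, the difference quotients of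
  \<open>f\<^sub>\<xi>\<close> and \<open>\<nabla>f\<^sub>\<xi>\<close> are dominated, so \<open>\<nabla>\<close> commutes with \<open>E\<^sub>\<xi>\<close>. Hence \<open>\<nabla> log \<mu> = E\<^sub>\<xi> \<nabla>f\<^sub>\<xi>\<close> is
  \<open>L\<^sub>2\<close>-Lipschitz, every eigenvalue of the Hessian has modulus at most \<open>L\<^sub>2\<close>, and
  \<open>tr\<^sup>+ \<le> d L\<^sub>2\<close> holds pointwise. The centred gradients \<open>a\<^sub>\<xi> = \<nabla>f\<^sub>\<xi> - E\<^sub>\<xi> \<nabla>f\<^sub>\<xi>\<close> are bounded
  by \<open>2 L\<^sub>1\<close> and \<open>2 L\<^sub>2\<close>-Lipschitz; so the Rayleigh quotients of \<open>\<Sigma> = E\<^sub>\<xi> a\<^sub>\<xi> a\<^sub>\<xi>\<^sup>T\<close> are at most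
  \<open>4 L\<^sub>1\<^sup>2\<close>, and \<open>\<nabla>\<cdot>\<Sigma> = E\<^sub>\<xi> (tr(Da\<^sub>\<xi>) a\<^sub>\<xi> + Da\<^sub>\<xi> a\<^sub>\<xi>)\<close> has norm at most
  \<open>(d + 1) 2 L\<^sub>2 2 L\<^sub>1\<close>. Normalising constants do not affect derivatives.\<close>

lemma has_derivative_imp_difference_quotient_LIMSEQ:
  fixes f :: "'a::real_normed_vector \<Rightarrow> 'b::real_normed_vector"
  assumes "(f has_derivative f') (at x)"
  shows "(\<lambda>n. real (Suc n) *\<^sub>R (f (x + (1 / real (Suc n)) *\<^sub>R h) - f x)) \<longlonglongrightarrow> f' h"
proof (cases "h = 0")
  case True
  then show ?thesis
    using has_derivative_bounded_linear[OF assms] by (simp add: linear_simps)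
next
  case False
  have lin: "bounded_linear f'"
    and remainder: "(\<lambda>k. norm (f (x + k) - f x - f' k) / norm k) \<midarrow>0\<rightarrow> 0"
    using assms by (simp_all add: has_derivative_at)
  define k where "k n = (1 / real (Suc n)) *\<^sub>R h" for n
  have "(\<lambda>n. 1 / real (Suc n)) \<longlonglongrightarrow> 0"
    using LIMSEQ_Suc[OF lim_1_over_n] by simp
  then have "k \<longlonglongrightarrow> 0"
    unfolding k_def using tendsto_scaleR[OF _ tendsto_const[of h]] by fastforce
  then have "filterlim k (at 0) sequentially"
    by (rule filterlim_atI) (use False in \<open>auto simp: k_def\<close>)
  from tendsto_mult_left_zero[OF filterlim_compose[OF remainder this], of "norm h"]
  have "(\<lambda>n. norm (f (x + k n) - f x - f' (k n)) / norm (k n) * norm h) \<longlonglongrightarrow> 0" .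
  moreover have "norm (f (x + k n) - f x - f' (k n)) / norm (k n) * norm h =
      norm (real (Suc n) *\<^sub>R (f (x + k n) - f x) - f' h)" for n
  proof -
    have "real (Suc n) *\<^sub>R (f (x + k n) - f x) - f' h
        = real (Suc n) *\<^sub>R (f (x + k n) - f x - f' (k n))"
      using lin by (simp add: k_def linear_simps algebra_simps)
    moreover have "norm (k n) = norm h / real (Suc n)"
      by (simp add: k_def)
    ultimately show ?thesis
      using False by (simp del: of_nat_Suc)
  qed
  ultimately have "(\<lambda>n. norm (real (Suc n) *\<^sub>R (f (x + k n) - f x) - f' h)) \<longlonglongrightarrow> 0"
    by simp
  then show ?thesis
    unfolding k_def tendsto_norm_zero_iff by (rule LIM_zero_cancel)
qed

lemma has_derivative_norm_le:
  fixes f :: "'a::real_normed_vector \<Rightarrow> 'b::real_normed_vector"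
  assumes "(f has_derivative f') (at x)" and "\<And>y. norm (f y - f x) \<le> L * norm (y - x)"
  shows "norm (f' h) \<le> L * norm h"
proof (rule LIMSEQ_le_const2[OF tendsto_norm[OF has_derivative_imp_difference_quotient_LIMSEQ[OF assms(1)]]],
    intro exI allI impI)
  fix n :: nat
  have "norm (real (Suc n) *\<^sub>R (f (x + (1 / real (Suc n)) *\<^sub>R h) - f x))
      = real (Suc n) * norm (f (x + (1 / real (Suc n)) *\<^sub>R h) - f x)" by simp
  also have "\<dots> \<le> real (Suc n) * (L * norm ((1 / real (Suc n)) *\<^sub>R h))"
    using assms(2)[of "x + (1 / real (Suc n)) *\<^sub>R h"] by (intro mult_left_mono) auto
  also have "\<dots> = L * norm h" by simp
  finally show "norm (real (Suc n) *\<^sub>R (f (x + (1 / real (Suc n)) *\<^sub>R h) - f x)) \<le> L * norm h" .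
qed

lemma borel_measurable_has_derivative_param:
  fixes F :: "'i \<Rightarrow> 'a::real_normed_vector \<Rightarrow> 'b::{real_normed_vector, second_countable_topology}"
  assumes "\<And>\<xi>. \<xi> \<in> space M \<Longrightarrow> (F \<xi> has_derivative F' \<xi>) (at x)"
    and "\<And>y. (\<lambda>\<xi>. F \<xi> y) \<in> borel_measurable M"
  shows "(\<lambda>\<xi>. F' \<xi> h) \<in> borel_measurable M"
  by (rule borel_measurable_LIMSEQ_metric[OF _ has_derivative_imp_difference_quotient_LIMSEQ[OF assms(1)]])
     (intro borel_measurable_scaleR borel_measurable_const borel_measurable_diff assms(2))

context finite_measure
begin

lemma bounded_linear_integral_param:
  fixes T :: "'a \<Rightarrow> 'v::real_normed_vector \<Rightarrow> 'w::{banach, second_countable_topology}"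
  assumes lin: "\<And>\<xi>. \<xi> \<in> space M \<Longrightarrow> linear (T \<xi>)"
    and bound: "\<And>\<xi> h. \<xi> \<in> space M \<Longrightarrow> norm (T \<xi> h) \<le> K * norm h"
    and meas: "\<And>h. (\<lambda>\<xi>. T \<xi> h) \<in> borel_measurable M"
  shows "bounded_linear (\<lambda>h. \<integral>\<xi>. T \<xi> h \<partial>M)"
proof (rule bounded_linear_intro[where K="K * measure M (space M)"])
  have int: "integrable M (\<lambda>\<xi>. T \<xi> h)" for h
    using bound meas by (intro integrable_const_bound[where B="K * norm h"]) auto
  fix a b :: 'v and r :: real
  have "(\<integral>\<xi>. T \<xi> (a + b) \<partial>M) = (\<integral>\<xi>. T \<xi> a + T \<xi> b \<partial>M)"
    by (rule Bochner_Integration.integral_cong) (simp_all add: lin linear_add)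
  then show "(\<integral>\<xi>. T \<xi> (a + b) \<partial>M) = (\<integral>\<xi>. T \<xi> a \<partial>M) + (\<integral>\<xi>. T \<xi> b \<partial>M)"
    using int by simp
  have "(\<integral>\<xi>. T \<xi> (r *\<^sub>R a) \<partial>M) = (\<integral>\<xi>. r *\<^sub>R T \<xi> a \<partial>M)"
    by (rule Bochner_Integration.integral_cong) (simp_all add: lin linear_scale)
  then show "(\<integral>\<xi>. T \<xi> (r *\<^sub>R a) \<partial>M) = r *\<^sub>R (\<integral>\<xi>. T \<xi> a \<partial>M)"
    by simp
  have "norm (\<integral>\<xi>. T \<xi> a \<partial>M) \<le> (\<integral>\<xi>. norm (T \<xi> a) \<partial>M)"
    by (rule integral_norm_bound)
  also have "\<dots> \<le> (\<integral>\<xi>. K * norm a \<partial>M)"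
    using int bound by (intro integral_mono) auto
  finally show "norm (\<integral>\<xi>. T \<xi> a \<partial>M) \<le> norm a * (K * measure M (space M))"
    by (simp add: mult_ac)
qed

lemma integrable_has_derivative_param:
  fixes F :: "'a \<Rightarrow> 'v::real_normed_vector \<Rightarrow> 'w::{banach, second_countable_topology}"
  assumes d: "\<And>\<xi>. \<xi> \<in> space M \<Longrightarrow> (F \<xi> has_derivative F' \<xi>) (at x)"
    and L: "\<And>\<xi> y. \<xi> \<in> space M \<Longrightarrow> norm (F \<xi> y - F \<xi> x) \<le> L * norm (y - x)"
    and m: "\<And>y. (\<lambda>\<xi>. F \<xi> y) \<in> borel_measurable M"
  shows "integrable M (\<lambda>\<xi>. F' \<xi> h)"
  using has_derivative_norm_le[OF d L] borel_measurable_has_derivative_param[OF d m]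
  by (intro integrable_const_bound[where B="L * norm h"]) auto

lemma tendsto_integral_remainder:
  fixes F :: "'a \<Rightarrow> 'v::real_normed_vector \<Rightarrow> 'w::{banach, second_countable_topology}"
  assumes d: "\<And>\<xi>. \<xi> \<in> space M \<Longrightarrow> (F \<xi> has_derivative F' \<xi>) (at x)"
    and L: "\<And>\<xi> y. \<xi> \<in> space M \<Longrightarrow> norm (F \<xi> y - F \<xi> x) \<le> L * norm (y - x)"
    and m: "\<And>y. (\<lambda>\<xi>. F \<xi> y) \<in> borel_measurable M"
  shows "((\<lambda>h. \<integral>\<xi>. norm (F \<xi> (x + h) - F \<xi> x - F' \<xi> h) / norm h \<partial>M) \<longlongrightarrow> 0) (at 0)"
  unfolding tendsto_at_iff_sequentially comp_def
proof (intro allI impI)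
  define R where "R \<xi> h = norm (F \<xi> (x + h) - F \<xi> x - F' \<xi> h) / norm h" for \<xi> h
  fix X :: "nat \<Rightarrow> 'v" assume X: "\<forall>n. X n \<in> UNIV - {0}" "X \<longlonglongrightarrow> 0"
  have X_at: "filterlim X (at 0) sequentially"
    by (rule filterlim_atI[OF X(2)]) (use X(1) in auto)
  have "(\<lambda>n. \<integral>\<xi>. R \<xi> (X n) \<partial>M) \<longlonglongrightarrow> (\<integral>\<xi>. 0 \<partial>M)"
  proof (rule integral_dominated_convergence[where w="\<lambda>_. 2 * L"])
    show "(\<lambda>\<xi>. R \<xi> (X n)) \<in> borel_measurable M" for n
      unfolding R_def using m borel_measurable_has_derivative_param[OF d m] by measurable
    show "AE \<xi> in M. (\<lambda>n. R \<xi> (X n)) \<longlonglongrightarrow> 0"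
    proof (rule AE_I2)
      fix \<xi> assume "\<xi> \<in> space M"
      then have "(R \<xi> \<longlongrightarrow> 0) (at 0)"
        unfolding R_def[abs_def] using d has_derivative_at by blast
      from filterlim_compose[OF this X_at] show "(\<lambda>n. R \<xi> (X n)) \<longlonglongrightarrow> 0" .
    qed
    show "AE \<xi> in M. norm (R \<xi> (X n)) \<le> 2 * L" for n
    proof (rule AE_I2)
      fix \<xi> assume \<xi>: "\<xi> \<in> space M"
      have "norm (F \<xi> (x + X n) - F \<xi> x - F' \<xi> (X n))
          \<le> norm (F \<xi> (x + X n) - F \<xi> x) + norm (F' \<xi> (X n))"
        by (rule norm_triangle_ineq4)
      also have "\<dots> \<le> 2 * L * norm (X n)"
        using L[OF \<xi>, of "x + X n"] has_derivative_norm_le[OF d[OF \<xi>] L[OF \<xi>], of "X n"] by simp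
      finally show "norm (R \<xi> (X n)) \<le> 2 * L"
        using X(1) by (simp add: R_def divide_le_eq)
    qed
  qed simp_all
  then show "(\<lambda>n. \<integral>\<xi>. R \<xi> (X n) \<partial>M) \<longlonglongrightarrow> 0"
    by simp
qed

lemma has_derivative_integral_param:
  fixes F :: "'a \<Rightarrow> 'v::real_normed_vector \<Rightarrow> 'w::{banach, second_countable_topology}"
  assumes d: "\<And>\<xi>. \<xi> \<in> space M \<Longrightarrow> (F \<xi> has_derivative F' \<xi>) (at x)"
    and L: "\<And>\<xi> y. \<xi> \<in> space M \<Longrightarrow> norm (F \<xi> y - F \<xi> x) \<le> L * norm (y - x)"
    and m: "\<And>y. (\<lambda>\<xi>. F \<xi> y) \<in> borel_measurable M"
    and i: "\<And>y. integrable M (\<lambda>\<xi>. F \<xi> y)"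
  shows "((\<lambda>y. \<integral>\<xi>. F \<xi> y \<partial>M) has_derivative (\<lambda>h. \<integral>\<xi>. F' \<xi> h \<partial>M)) (at x)"
proof -
  have ih: "integrable M (\<lambda>\<xi>. F' \<xi> h)" for h
    by (rule integrable_has_derivative_param[OF d L m])
  have lin: "bounded_linear (\<lambda>h. \<integral>\<xi>. F' \<xi> h \<partial>M)"
    using has_derivative_bounded_linear[OF d] has_derivative_norm_le[OF d L]
      borel_measurable_has_derivative_param[OF d m]
    by (intro bounded_linear_integral_param) (auto dest: bounded_linear.linear)
  have "norm ((\<integral>\<xi>. F \<xi> (x + h) \<partial>M) - (\<integral>\<xi>. F \<xi> x \<partial>M) - (\<integral>\<xi>. F' \<xi> h \<partial>M))
      \<le> (\<integral>\<xi>. norm (F \<xi> (x + h) - F \<xi> x - F' \<xi> h) \<partial>M)" for h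
  proof -
    have "(\<integral>\<xi>. F \<xi> (x + h) \<partial>M) - (\<integral>\<xi>. F \<xi> x \<partial>M) - (\<integral>\<xi>. F' \<xi> h \<partial>M)
        = (\<integral>\<xi>. F \<xi> (x + h) - F \<xi> x - F' \<xi> h \<partial>M)"
      using i ih by simp
    then show ?thesis
      by (metis integral_norm_bound)
  qed
  then have "\<forall>\<^sub>F h in at 0. norm ((\<integral>\<xi>. F \<xi> (x + h) \<partial>M) - (\<integral>\<xi>. F \<xi> x \<partial>M)
      - (\<integral>\<xi>. F' \<xi> h \<partial>M)) / norm h \<le> (\<integral>\<xi>. norm (F \<xi> (x + h) - F \<xi> x - F' \<xi> h) / norm h \<partial>M)"
    by (intro always_eventually allI) (simp add: divide_right_mono)
  then have "((\<lambda>h. norm ((\<integral>\<xi>. F \<xi> (x + h) \<partial>M) - (\<integral>\<xi>. F \<xi> x \<partial>M)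
      - (\<integral>\<xi>. F' \<xi> h \<partial>M)) / norm h) \<longlongrightarrow> 0) (at 0)"
    by (intro tendsto_sandwich[OF _ _ tendsto_const tendsto_integral_remainder[OF d L m]]) simp_all
  with lin show ?thesis
    by (simp add: has_derivative_at)
qed

end

lemma linear_eq_sum_axis:
  fixes D :: "real^'n \<Rightarrow> 'b::real_vector"
  assumes "linear D"
  shows "D v = (\<Sum>j\<in>UNIV. v $ j *\<^sub>R D (axis j 1))"
proof -
  have "D v = D (\<Sum>j\<in>UNIV. v $ j *\<^sub>R axis j 1)"
    using basis_expansion[of v] by (simp add: scalar_mult_eq_scaleR)
  then show ?thesis
    by (simp add: linear_sum[OF assms] linear_scale[OF assms])
qed

lemma has_derivative_grad:
  fixes f :: "real^'n \<Rightarrow> real"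
  assumes "f differentiable (at x)"
  shows "(f has_derivative (\<lambda>h. grad f x \<bullet> h)) (at x)"
proof -
  have d: "(f has_derivative frechet_derivative f (at x)) (at x)"
    using assms frechet_derivative_works by blast
  have "frechet_derivative f (at x) h = grad f x \<bullet> h" for h
    using linear_eq_sum_axis[OF has_derivative_linear[OF d], of h]
    by (simp add: grad_def inner_vec_def mult.commute)
  then have "frechet_derivative f (at x) = (\<lambda>h. grad f x \<bullet> h)"
    by blast
  with d show ?thesis
    by simp
qed

lemma grad_eqI:
  fixes f :: "real^'n \<Rightarrow> real"
  assumes "(f has_derivative (\<lambda>h. g \<bullet> h)) (at x)"
  shows "grad f x = g"
  unfolding grad_def frechet_derivative_at[OF assms, symmetric]
  by (simp add: vec_eq_iff inner_axis)

lemma hess_mult_vec: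
  assumes "(grad f has_derivative D) (at x)"
  shows "hess f x *v v = D v"
proof -
  have "frechet_derivative (\<lambda>y. grad f y $ i) (at x) = (\<lambda>h. D h $ i)" for i
    by (rule frechet_derivative_at[symmetric])
       (rule bounded_linear.has_derivative[OF bounded_linear_vec_nth assms])
  then show ?thesis
    using linear_eq_sum_axis[OF has_derivative_linear[OF assms], of v]
    by (simp add: hess_def vec_eq_iff matrix_vector_mult_def mult.commute)
qed

lemma bounded_linear_transpose: "bounded_linear (transpose :: real^'n^'m \<Rightarrow> real^'m^'n)"
  unfolding linear_conv_bounded_linear[symmetric]
  by (rule linearI) (simp_all add: transpose_def vec_eq_iff)

lemma bounded_linear_column: "bounded_linear (column j :: real^'n^'m \<Rightarrow> real^'m)"
  unfolding linear_conv_bounded_linear[symmetric]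
  by (rule linearI) (simp_all add: column_def vec_eq_iff)

lemma mdiv_eq_sum_column:
  assumes "(S has_derivative D) (at x)"
  shows "mdiv S x = (\<Sum>j\<in>UNIV. column j (D (axis j 1)))"
proof -
  have "frechet_derivative (\<lambda>y. S y $ i $ j) (at x) = (\<lambda>h. D h $ i $ j)" for i j
    by (rule frechet_derivative_at[symmetric])
       (intro bounded_linear.has_derivative[OF _ assms]
         bounded_linear_compose[OF bounded_linear_vec_nth bounded_linear_vec_nth])
  then show ?thesis
    by (simp add: mdiv_def column_def vec_eq_iff)
qed

lemma poly_charpoly:
  "poly (charpoly A) r = det (\<chi> i j. (if i = j then r else 0) - A $ i $ j)"
proof -
  have "poly ((if i = j then [:0, 1:] else 0) - [:a:]) r = (if i = j then r else 0) - a"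
    for i j :: 'n and a
    by auto
  moreover have "poly (if b then [:0, 1:] else 0) r = (if b then r else 0)" for b
    by auto
  ultimately show ?thesis
    unfolding charpoly_def det_def by (simp add: poly_sum poly_prod)
qed

lemma char_matrix_mult_vec:
  "(\<chi> i j. (if i = j then r else 0) - A $ i $ j) *v v = r *\<^sub>R v - A *v v"
proof -
  have "(\<Sum>j\<in>UNIV. (if i = j then r else 0) * v $ j) = r * v $ i" for i
    by (simp add: if_distrib[of "\<lambda>a. a * _"] cong: if_cong)
  then show ?thesis
    by (simp add: vec_eq_iff matrix_vector_mult_def left_diff_distrib sum_subtractf)
qed

lemma charpoly_root_iff_eigenvalue:
  fixes A :: "real^'n^'n"
  shows "poly (charpoly A) r = 0 \<longleftrightarrow> (\<exists>v. v \<noteq> 0 \<and> A *v v = r *\<^sub>R v)"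
proof -
  let ?M = "(\<chi> i j. (if i = j then r else 0) - A $ i $ j) :: real^'n^'n"
  have "poly (charpoly A) r = 0 \<longleftrightarrow> \<not> invertible ?M"
    by (simp add: poly_charpoly invertible_det_nz)
  also have "\<dots> \<longleftrightarrow> (\<exists>v. v \<noteq> 0 \<and> ?M *v v = 0)"
    by (auto simp: invertible_left_inverse matrix_left_invertible_ker)
  finally show ?thesis
    by (force simp: char_matrix_mult_vec)
qed

lemma degree_charpoly_le: "degree (charpoly (A :: real^'n^'n)) \<le> CARD('n)"
  unfolding charpoly_def det_def
proof (rule degree_sum_le)
  fix p :: "'n \<Rightarrow> 'n"
  let ?e = "\<lambda>i. (\<chi> i j. (if i = j then [:0, 1:] else 0) - [:A $ i $ j:]) $ i $ p i"
  have "degree (\<Prod>i\<in>UNIV. ?e i) \<le> (\<Sum>i\<in>UNIV. degree (?e i))"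
    using degree_prod_sum_le[of UNIV ?e] by (simp add: o_def)
  also have "\<dots> \<le> (\<Sum>i\<in>(UNIV::'n set). 1)"
    by (intro sum_mono) (auto intro: degree_diff_le)
  finally show "degree (of_int (sign p) * (\<Prod>i\<in>UNIV. ?e i)) \<le> CARD('n)"
    by (intro order_trans[OF degree_mult_le]) simp
qed simp

lemma sum_order_abs_roots_le:
  fixes p :: "real poly"
  assumes "\<And>r. poly p r = 0 \<Longrightarrow> \<bar>r\<bar> \<le> c" and "0 \<le> c" and "degree p \<le> n"
  shows "(\<Sum>r\<in>{r. poly p r = 0}. real (order r p) * \<bar>r\<bar>) \<le> real n * c"
proof (cases "p = 0")
  case True
  then show ?thesis
    using assms by (simp add: infinite_UNIV_char_0)
next
  case False
  have "(\<Sum>r\<in>{r. poly p r = 0}. real (order r p) * \<bar>r\<bar>)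
      \<le> (\<Sum>r\<in>{r. poly p r = 0}. real (order r p) * c)"
    by (intro sum_mono mult_left_mono assms) auto
  also have "\<dots> = real (\<Sum>r\<in>{r. poly p r = 0}. order r p) * c"
    by (simp add: sum_distrib_right)
  also have "\<dots> \<le> real n * c"
  proof (intro mult_right_mono assms(2))
    have "(\<Sum>r\<in>{r. poly p r = 0}. order r p) \<le> n"
      using sum_order_le_degree[OF False] assms(3) by simp
    then show "real (\<Sum>r\<in>{r. poly p r = 0}. order r p) \<le> real n"
      by (simp only: of_nat_le_iff)
  qed
  finally show ?thesis .
qed

lemma tr_plus_le:
  fixes A :: "real^'n^'n"
  assumes "\<And>v. norm (A *v v) \<le> c * norm v" and "0 \<le> c"
  shows "tr_plus A \<le> real CARD('n) * c"
  unfolding tr_plus_def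
proof (rule sum_order_abs_roots_le[OF _ assms(2) degree_charpoly_le])
  fix r assume "poly (charpoly A) r = 0"
  then obtain v where "v \<noteq> 0" "A *v v = r *\<^sub>R v"
    by (auto simp: charpoly_root_iff_eigenvalue)
  with assms(1)[of v] show "\<bar>r\<bar> \<le> c"
    by simp
qed

lemma quadratic_nonneg_imp_linear_coeff_zero:
  fixes b c :: real
  assumes "\<And>t. 0 \<le> t * b + t\<^sup>2 * c"
  shows "b = 0"
proof -
  define t where "t = - b / (\<bar>c\<bar> + 1)"
  have "0 \<le> (\<bar>c\<bar> + 1)\<^sup>2 * (t * b + t\<^sup>2 * c)"
    using assms[of t] by simp
  also have "\<dots> = (\<bar>c\<bar> + 1) * ((\<bar>c\<bar> + 1) * t) * b + ((\<bar>c\<bar> + 1) * t)\<^sup>2 * c"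
    by (simp add: power2_eq_square algebra_simps)
  also have "(\<bar>c\<bar> + 1) * t = - b"
    unfolding t_def by (simp add: add_pos_nonneg)
  also have "(\<bar>c\<bar> + 1) * - b * b + (- b)\<^sup>2 * c = b\<^sup>2 * (c - \<bar>c\<bar> - 1)"
    by (simp add: power2_eq_square algebra_simps)
  also have "\<dots> \<le> - b\<^sup>2"
    using mult_nonneg_nonpos[of "b\<^sup>2" "c - \<bar>c\<bar>"] by (simp add: algebra_simps)
  finally show ?thesis
    by simp
qed

lemma inner_symmetric_matrix:
  fixes B :: "real^'n^'n"
  assumes "transpose B = B"
  shows "x \<bullet> (B *v y) = (B *v x) \<bullet> y"
  by (metis assms dot_lmul_matrix vector_transpose_matrix)

lemma psd_quadratic_form_zero_imp_kernel:
  fixes B :: "real^'n^'n"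
  assumes sym: "transpose B = B" and psd: "\<And>w. 0 \<le> w \<bullet> (B *v w)" and "v \<bullet> (B *v v) = 0"
  shows "B *v v = 0"
proof -
  let ?u = "B *v v"
  have "(v + t *\<^sub>R ?u) \<bullet> (B *v (v + t *\<^sub>R ?u)) = t * (2 * (?u \<bullet> ?u)) + t\<^sup>2 * (?u \<bullet> (B *v ?u))"
    for t
    using assms(3) inner_symmetric_matrix[OF sym, of v ?u]
    by (simp add: inner_commute[of v] algebra_simps power2_eq_square)
  then have "2 * (?u \<bullet> ?u) = 0"
    by (metis psd quadratic_nonneg_imp_linear_coeff_zero)
  then show ?thesis
    by simp
qed

text \<open>The maximiser of the Rayleigh quotient is an eigenvector.\<close>
lemma symmetric_matrix_has_eigenvector:
  fixes A :: "real^'n^'n"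
  assumes sym: "transpose A = A"
  shows "\<exists>r v. v \<noteq> 0 \<and> A *v v = r *\<^sub>R v"
proof -
  have "continuous_on (sphere 0 1) (\<lambda>w. w \<bullet> (A *v w))"
    by (intro continuous_intros linear_continuous_on matrix_vector_mul_bounded_linear)
  moreover have "axis undefined 1 \<in> sphere (0 :: real^'n) 1"
    by simp
  ultimately obtain v where v: "v \<in> sphere 0 1"
    and max: "\<And>w. w \<in> sphere 0 1 \<Longrightarrow> w \<bullet> (A *v w) \<le> v \<bullet> (A *v v)"
    using continuous_attains_sup[OF compact_sphere] by blast
  define lam where "lam = v \<bullet> (A *v v)"
  define B :: "real^'n^'n" where "B = (\<chi> i j. (if i = j then lam else 0) - A $ i $ j)"
  have Bw: "B *v w = lam *\<^sub>R w - A *v w" for w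
    unfolding B_def by (rule char_matrix_mult_vec)
  have "transpose B = B"
    using sym by (auto simp: B_def transpose_def vec_eq_iff)
  moreover have "0 \<le> w \<bullet> (B *v w)" for w
  proof (cases "w = 0")
    case False
    let ?u = "(1 / norm w) *\<^sub>R w"
    have "?u \<bullet> (A *v ?u) \<le> lam"
      using max[of ?u] False by (simp add: lam_def)
    then have "w \<bullet> (A *v w) \<le> lam * (w \<bullet> w)"
      using False by (simp add: matrix_vector_mult_scaleR field_simps power2_norm_eq_inner[symmetric]
          power2_eq_square)
    then show ?thesis
      by (simp add: Bw inner_diff_right)
  qed simp
  moreover have "v \<bullet> (B *v v) = 0"
    using v by (simp add: Bw lam_def inner_diff_right power2_norm_eq_inner[symmetric])
  ultimately have "A *v v = lam *\<^sub>R v"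
    using psd_quadratic_form_zero_imp_kernel by (metis Bw eq_iff_diff_eq_0)
  moreover have "v \<noteq> 0"
    using v by auto
  ultimately show ?thesis
    by blast
qed

lemma lambda_max_le:
  fixes A :: "real^'n^'n"
  assumes "transpose A = A" and "\<And>r v. v \<noteq> 0 \<Longrightarrow> A *v v = r *\<^sub>R v \<Longrightarrow> r \<le> c"
  shows "lambda_max A \<le> c"
proof -
  have roots: "r \<le> c" if "poly (charpoly A) r = 0" for r
    using that assms(2) by (auto simp: charpoly_root_iff_eigenvalue)
  then have "poly (charpoly A) (c + 1) \<noteq> 0"
    by fastforce
  then have "charpoly A \<noteq> 0"
    by auto
  then have "finite {r. poly (charpoly A) r = 0}"
    by (rule poly_roots_finite)
  moreover have "{r. poly (charpoly A) r = 0} \<noteq> {}"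
    using symmetric_matrix_has_eigenvector[OF assms(1)] by (auto simp: charpoly_root_iff_eigenvalue)
  ultimately show ?thesis
    unfolding lambda_max_def using roots by simp
qed

lemma outer_nth [simp]: "outer u v $ i $ j = u $ i * v $ j"
  by (simp add: outer_def)

lemma norm_outer: "norm (outer u v) = norm u * norm v"
proof -
  have row: "outer u v $ i = u $ i *\<^sub>R v" for i
    by (simp add: vec_eq_iff)
  have "norm (outer u v) = L2_set (\<lambda>i. norm v * \<bar>u $ i\<bar>) UNIV"
    unfolding norm_vec_def[of "outer u v"]
    by (intro L2_set_cong refl) (simp only: row norm_scaleR real_norm_def mult.commute)
  also have "\<dots> = norm v * norm u"
    by (simp add: L2_set_right_distrib norm_vec_def)
  finally show ?thesis
    by (simp add: mult.commute)
qed

lemma bounded_bilinear_outer: "bounded_bilinear (outer :: real^'n \<Rightarrow> real^'n \<Rightarrow> real^'n^'n)"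
  by (rule bounded_bilinear.intro)
     (auto simp: vec_eq_iff algebra_simps norm_outer intro!: exI[of _ 1])

lemma outer_mult_vec: "outer u w *v v = (w \<bullet> v) *\<^sub>R u"
  by (simp add: vec_eq_iff matrix_vector_mult_def inner_vec_def sum_distrib_left mult_ac)

lemma transpose_outer: "transpose (outer u w) = outer w u"
  by (simp add: transpose_def vec_eq_iff mult.commute)

lemma norm_outer_self_diff_le: "norm (outer u u - outer w w) \<le> norm (u - w) * (norm u + norm w)"
proof -
  have "outer u u - outer w w = outer (u - w) u + outer w (u - w)"
    by (simp add: vec_eq_iff algebra_simps)
  then have "norm (outer u u - outer w w) \<le> norm (u - w) * norm u + norm w * norm (u - w)"
    by (metis norm_outer norm_triangle_ineq)
  then show ?thesis
    by (simp add: algebra_simps)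
qed

text \<open>The sum is \<open>tr B \<cdot> u + B u\<close>, the divergence of \<open>a a\<^sup>T\<close> at a point where \<open>a = u\<close> and
  \<open>Da = B\<close>.\<close>
lemma norm_divergence_outer_le:
  fixes B :: "real^'n \<Rightarrow> real^'n"
  assumes lin: "linear B" and bound: "\<And>h. norm (B h) \<le> K * norm h"
  shows "norm (\<Sum>j\<in>UNIV. column j (outer u (B (axis j 1)) + outer (B (axis j 1)) u))
    \<le> (real CARD('n) + 1) * K * norm u"
proof -
  define tr where "tr = (\<Sum>j\<in>UNIV. B (axis j 1) $ j)"
  have "(\<Sum>j\<in>UNIV. column j (outer u (B (axis j 1)) + outer (B (axis j 1)) u)) = tr *\<^sub>R u + B u"
    using linear_eq_sum_axis[OF lin, of u]
    by (simp add: tr_def vec_eq_iff column_def sum.distrib sum_distrib_left mult.commute)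
  moreover have "\<bar>tr\<bar> \<le> real CARD('n) * K"
  proof -
    have "\<bar>tr\<bar> \<le> (\<Sum>j\<in>UNIV. \<bar>B (axis j 1) $ j\<bar>)"
      unfolding tr_def by (rule sum_abs)
    also have "\<dots> \<le> (\<Sum>j\<in>(UNIV::'n set). K)"
      using component_le_norm_cart order_trans bound[of "axis _ 1"] by (intro sum_mono) fastforce
    finally show ?thesis
      by simp
  qed
  ultimately show ?thesis
    using bound[of u] norm_triangle_ineq[of "tr *\<^sub>R u" "B u"]
      mult_right_mono[of "\<bar>tr\<bar>" "real CARD('n) * K" "norm u"]
    by (simp add: algebra_simps)
qed

context prob_space
begin

text \<open>No integrability is assumed: a non-integrable \<open>f\<close> has integral \<open>0 \<le> c\<close>.\<close>
lemma integral_le_nonneg_const: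
  fixes f :: "'a \<Rightarrow> real"
  assumes "\<And>x. x \<in> space M \<Longrightarrow> f x \<le> c" and "0 \<le> c"
  shows "(\<integral>x. f x \<partial>M) \<le> c"
proof (cases "integrable M f")
  case True
  with assms(1) show ?thesis
    by (intro integral_le_const) auto
next
  case False
  with assms(2) show ?thesis
    by (simp add: not_integrable_integral_eq)
qed

end

locale lipschitz_gradient_family = prob_space P for P :: "'i measure" +
  fixes f :: "'i \<Rightarrow> real^'n \<Rightarrow> real" and L1 L2 :: real
  assumes measurable_param: "\<And>x. (\<lambda>\<xi>. f \<xi> x) \<in> borel_measurable P"
    and integrable_param: "\<And>x. integrable P (\<lambda>\<xi>. f \<xi> x)"
    and differentiable: "\<And>\<xi> x. \<xi> \<in> space P \<Longrightarrow> f \<xi> differentiable (at x)"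
    and grad_differentiable: "\<And>\<xi> x. \<xi> \<in> space P \<Longrightarrow> grad (f \<xi>) differentiable (at x)"
    and lipschitz: "\<And>\<xi>. \<xi> \<in> space P \<Longrightarrow> L1-lipschitz_on UNIV (f \<xi>)"
    and grad_lipschitz: "\<And>\<xi>. \<xi> \<in> space P \<Longrightarrow> L2-lipschitz_on UNIV (grad (f \<xi>))"
begin

definition mean :: "real^'n \<Rightarrow> real" where
  "mean x = (\<integral>\<xi>. f \<xi> x \<partial>P)"

definition centred_grad :: "'i \<Rightarrow> real^'n \<Rightarrow> real^'n" where
  "centred_grad \<xi> x = grad (f \<xi>) x - grad mean x"

definition grad_covariance :: "real^'n \<Rightarrow> real^'n^'n" where
  "grad_covariance x = (\<integral>\<xi>. outer (centred_grad \<xi> x) (centred_grad \<xi> x) \<partial>P)"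

lemma lipschitz_constants_nonneg: "0 \<le> L1" "0 \<le> L2"
proof -
  obtain \<xi> where "\<xi> \<in> space P"
    using not_empty by blast
  then show "0 \<le> L1" "0 \<le> L2"
    using lipschitz grad_lipschitz lipschitz_on_nonneg by blast+
qed

lemma norm_diff_le:
  assumes "\<xi> \<in> space P"
  shows "norm (f \<xi> y - f \<xi> z) \<le> L1 * norm (y - z)"
  using lipschitz_onD[OF lipschitz[OF assms]] by (simp add: dist_norm)

lemma norm_grad_diff_le:
  assumes "\<xi> \<in> space P"
  shows "norm (grad (f \<xi>) y - grad (f \<xi>) z) \<le> L2 * norm (y - z)"
  using lipschitz_onD[OF grad_lipschitz[OF assms]] by (simp add: dist_norm)

lemma norm_grad_le:
  assumes "\<xi> \<in> space P"
  shows "norm (grad (f \<xi>) x) \<le> L1"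
proof -
  have "norm (grad (f \<xi>) x \<bullet> grad (f \<xi>) x) \<le> L1 * norm (grad (f \<xi>) x)"
    by (rule has_derivative_norm_le[OF has_derivative_grad[OF differentiable[OF assms]]
          norm_diff_le[OF assms]])
  then have "norm (grad (f \<xi>) x) * norm (grad (f \<xi>) x) \<le> L1 * norm (grad (f \<xi>) x)"
    by (simp add: power2_norm_eq_inner[symmetric] power2_eq_square)
  then show ?thesis
    using lipschitz_constants_nonneg(1) by (cases "grad (f \<xi>) x = 0") auto
qed

lemma measurable_grad: "(\<lambda>\<xi>. grad (f \<xi>) x) \<in> borel_measurable P"
proof (subst borel_measurable_euclidean_space, intro ballI)
  fix b :: "real^'n"
  show "(\<lambda>\<xi>. grad (f \<xi>) x \<bullet> b) \<in> borel_measurable P"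
    using borel_measurable_has_derivative_param[OF has_derivative_grad[OF differentiable]
        measurable_param, of x b]
    by (simp add: inner_commute)
qed

lemma integrable_grad: "integrable P (\<lambda>\<xi>. grad (f \<xi>) x)"
  using norm_grad_le measurable_grad by (intro integrable_const_bound[where B=L1]) auto

lemma has_derivative_mean: "(mean has_derivative (\<lambda>h. (\<integral>\<xi>. grad (f \<xi>) x \<partial>P) \<bullet> h)) (at x)"
proof -
  have "(mean has_derivative (\<lambda>h. \<integral>\<xi>. grad (f \<xi>) x \<bullet> h \<partial>P)) (at x)"
    unfolding mean_def[abs_def]
    by (rule has_derivative_integral_param[OF has_derivative_grad[OF differentiable]
          norm_diff_le measurable_param integrable_param])
  then show ?thesis
    by (simp add: integrable_grad)
qed

lemma grad_mean: "grad mean x = (\<integral>\<xi>. grad (f \<xi>) x \<partial>P)"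
  by (rule grad_eqI[OF has_derivative_mean])

lemma norm_grad_mean_le: "norm (grad mean x) \<le> L1"
proof -
  have "norm (grad mean x) \<le> (\<integral>\<xi>. norm (grad (f \<xi>) x) \<partial>P)"
    unfolding grad_mean by (rule integral_norm_bound)
  also have "\<dots> \<le> L1"
    using norm_grad_le lipschitz_constants_nonneg(1) by (rule integral_le_nonneg_const)
  finally show ?thesis .
qed

lemma norm_grad_mean_diff_le: "norm (grad mean y - grad mean z) \<le> L2 * norm (y - z)"
proof -
  have "grad mean y - grad mean z = (\<integral>\<xi>. grad (f \<xi>) y - grad (f \<xi>) z \<partial>P)"
    by (simp add: grad_mean integrable_grad)
  also have "norm \<dots> \<le> (\<integral>\<xi>. norm (grad (f \<xi>) y - grad (f \<xi>) z) \<partial>P)"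
    by (rule integral_norm_bound)
  also have "\<dots> \<le> L2 * norm (y - z)"
    using norm_grad_diff_le lipschitz_constants_nonneg(2) by (intro integral_le_nonneg_const) auto
  finally show ?thesis .
qed

lemma grad_mean_differentiable: "grad mean differentiable (at x)"
proof -
  have "((\<lambda>y. \<integral>\<xi>. grad (f \<xi>) y \<partial>P) has_derivative
      (\<lambda>h. \<integral>\<xi>. frechet_derivative (grad (f \<xi>)) (at x) h \<partial>P)) (at x)"
    using grad_differentiable frechet_derivative_works norm_grad_diff_le measurable_grad integrable_grad
    by (intro has_derivative_integral_param) blast+
  then show ?thesis
    unfolding differentiable_def grad_mean[abs_def] by blast
qed

lemma tr_plus_hess_mean_le: "tr_plus (hess mean x) \<le> real CARD('n) * L2"
proof (rule tr_plus_le[OF _ lipschitz_constants_nonneg(2)])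
  let ?D = "frechet_derivative (grad mean) (at x)"
  have D: "(grad mean has_derivative ?D) (at x)"
    using grad_mean_differentiable frechet_derivative_works by blast
  show "norm (hess mean x *v v) \<le> L2 * norm v" for v
    unfolding hess_mult_vec[OF D] using norm_grad_mean_diff_le by (rule has_derivative_norm_le[OF D])
qed

lemma norm_centred_grad_le:
  assumes "\<xi> \<in> space P"
  shows "norm (centred_grad \<xi> x) \<le> 2 * L1"
  using norm_triangle_ineq4[of "grad (f \<xi>) x" "grad mean x"] norm_grad_le[OF assms, of x]
    norm_grad_mean_le[of x]
  by (simp add: centred_grad_def)

lemma norm_centred_grad_diff_le:
  assumes "\<xi> \<in> space P"
  shows "norm (centred_grad \<xi> y - centred_grad \<xi> z) \<le> 2 * L2 * norm (y - z)"
proof -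
  have "centred_grad \<xi> y - centred_grad \<xi> z
      = (grad (f \<xi>) y - grad (f \<xi>) z) - (grad mean y - grad mean z)"
    by (simp add: centred_grad_def)
  then show ?thesis
    using norm_triangle_ineq4[of "grad (f \<xi>) y - grad (f \<xi>) z" "grad mean y - grad mean z"]
      norm_grad_diff_le[OF assms, of y z] norm_grad_mean_diff_le[of y z]
    by simp
qed

lemma has_derivative_centred_grad:
  assumes "\<xi> \<in> space P"
  shows "(centred_grad \<xi> has_derivative frechet_derivative (centred_grad \<xi>) (at x)) (at x)"
proof -
  have "centred_grad \<xi> differentiable (at x)"
    unfolding centred_grad_def[abs_def]
    using grad_differentiable[OF assms] grad_mean_differentiable by (rule differentiable_diff)
  then show ?thesis
    by (simp add: frechet_derivative_works)
qed

lemma measurable_outer_centred_grad: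
  "(\<lambda>\<xi>. outer (centred_grad \<xi> x) (centred_grad \<xi> x)) \<in> borel_measurable P"
proof -
  have m: "(\<lambda>\<xi>. centred_grad \<xi> x) \<in> borel_measurable P"
    unfolding centred_grad_def by (intro borel_measurable_diff measurable_grad borel_measurable_const)
  have c: "continuous_on UNIV (\<lambda>p. outer (fst p) (snd p))"
    by (intro bounded_bilinear.continuous_on[OF bounded_bilinear_outer] continuous_on_fst
        continuous_on_snd continuous_on_id)
  show ?thesis
    using borel_measurable_continuous_Pair[OF m m c] .
qed

lemma integrable_outer_centred_grad:
  "integrable P (\<lambda>\<xi>. outer (centred_grad \<xi> x) (centred_grad \<xi> x))"
proof (rule integrable_const_bound[where B="2 * L1 * (2 * L1)"])
  show "AE \<xi> in P. norm (outer (centred_grad \<xi> x) (centred_grad \<xi> x)) \<le> 2 * L1 * (2 * L1)"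
  proof (rule AE_I2)
    fix \<xi> assume "\<xi> \<in> space P"
    then have "norm (centred_grad \<xi> x) \<le> 2 * L1"
      by (rule norm_centred_grad_le)
    then show "norm (outer (centred_grad \<xi> x) (centred_grad \<xi> x)) \<le> 2 * L1 * (2 * L1)"
      unfolding norm_outer using lipschitz_constants_nonneg by (intro mult_mono) auto
  qed
qed (rule measurable_outer_centred_grad)

lemma transpose_grad_covariance: "transpose (grad_covariance x) = grad_covariance x"
  using integral_bounded_linear[OF bounded_linear_transpose integrable_outer_centred_grad, of x]
  by (simp add: grad_covariance_def transpose_outer)

text \<open>Rayleigh quotients of the covariance are averages of squared projections of the
  centred gradients.\<close>
lemma lambda_max_grad_covariance_le: "lambda_max (grad_covariance x) \<le> 4 * L1\<^sup>2"
proof (rule lambda_max_le[OF transpose_grad_covariance])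
  fix r and v :: "real^'n"
  assume v: "v \<noteq> 0" "grad_covariance x *v v = r *\<^sub>R v"
  have rayleigh: "bounded_linear (\<lambda>S :: real^'n^'n. v \<bullet> (S *v v))"
    unfolding linear_conv_bounded_linear[symmetric]
    by (rule linearI) (simp_all add: matrix_vector_mult_add_rdistrib inner_add_right
        scaleR_matrix_vector_assoc[symmetric])
  have "r * (v \<bullet> v) = v \<bullet> (grad_covariance x *v v)"
    using v by simp
  also have "\<dots> = (\<integral>\<xi>. (centred_grad \<xi> x \<bullet> v)\<^sup>2 \<partial>P)"
    using integral_bounded_linear[OF rayleigh integrable_outer_centred_grad, of x]
    by (simp add: grad_covariance_def outer_mult_vec power2_eq_square inner_commute)
  also have "\<dots> \<le> (2 * L1 * norm v)\<^sup>2"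
  proof (rule integral_le_nonneg_const)
    fix \<xi> assume "\<xi> \<in> space P"
    then have "\<bar>centred_grad \<xi> x \<bullet> v\<bar> \<le> 2 * L1 * norm v"
      using Cauchy_Schwarz_ineq2[of "centred_grad \<xi> x" v] norm_centred_grad_le
      by (metis mult_right_mono norm_ge_zero order_trans)
    then show "(centred_grad \<xi> x \<bullet> v)\<^sup>2 \<le> (2 * L1 * norm v)\<^sup>2"
      by (metis abs_ge_zero power2_abs power_mono)
  qed simp
  finally have "r * (v \<bullet> v) \<le> 4 * L1\<^sup>2 * (v \<bullet> v)"
    by (simp add: power_mult_distrib power2_norm_eq_inner)
  with v(1) show "r \<le> 4 * L1\<^sup>2"
    by simp
qed

lemma norm_outer_centred_grad_diff_le:
  assumes "\<xi> \<in> space P"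
  shows "norm (outer (centred_grad \<xi> y) (centred_grad \<xi> y) - outer (centred_grad \<xi> x) (centred_grad \<xi> x))
    \<le> 8 * L1 * L2 * norm (y - x)"
proof -
  have "norm (outer (centred_grad \<xi> y) (centred_grad \<xi> y) - outer (centred_grad \<xi> x) (centred_grad \<xi> x))
      \<le> norm (centred_grad \<xi> y - centred_grad \<xi> x) * (norm (centred_grad \<xi> y) + norm (centred_grad \<xi> x))"
    by (rule norm_outer_self_diff_le)
  also have "\<dots> \<le> (2 * L2 * norm (y - x)) * (2 * L1 + 2 * L1)"
    using norm_centred_grad_diff_le[OF assms] norm_centred_grad_le[OF assms] lipschitz_constants_nonneg
    by (intro mult_mono add_mono) auto
  finally show ?thesis
    by (simp add: algebra_simps)
qed

lemma mdiv_grad_covariance: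
  fixes x :: "real^'n"
  defines "D \<xi> \<equiv> frechet_derivative (centred_grad \<xi>) (at x)"
  shows "mdiv grad_covariance x = (\<integral>\<xi>. (\<Sum>j\<in>UNIV. column j
      (outer (centred_grad \<xi> x) (D \<xi> (axis j 1)) + outer (D \<xi> (axis j 1)) (centred_grad \<xi> x))) \<partial>P)"
proof -
  define F' where "F' \<xi> h = outer (centred_grad \<xi> x) (D \<xi> h) + outer (D \<xi> h) (centred_grad \<xi> x)"
    for \<xi> h
  have "(centred_grad \<xi> has_derivative D \<xi>) (at x)" if "\<xi> \<in> space P" for \<xi>
    unfolding D_def by (rule has_derivative_centred_grad[OF that])
  then have dF: "((\<lambda>y. outer (centred_grad \<xi> y) (centred_grad \<xi> y)) has_derivative F' \<xi>) (at x)"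
    if "\<xi> \<in> space P" for \<xi>
    unfolding F'_def using that by (blast intro: bounded_bilinear.FDERIV[OF bounded_bilinear_outer])
  have F'_int: "integrable P (\<lambda>\<xi>. F' \<xi> h)" for h
    by (rule integrable_has_derivative_param[OF dF norm_outer_centred_grad_diff_le
          measurable_outer_centred_grad])
  have "(grad_covariance has_derivative (\<lambda>h. \<integral>\<xi>. F' \<xi> h \<partial>P)) (at x)"
    unfolding grad_covariance_def[abs_def]
    by (rule has_derivative_integral_param[OF dF norm_outer_centred_grad_diff_le
          measurable_outer_centred_grad integrable_outer_centred_grad])
  then have "mdiv grad_covariance x = (\<Sum>j\<in>UNIV. column j (\<integral>\<xi>. F' \<xi> (axis j 1) \<partial>P))"
    by (rule mdiv_eq_sum_column)
  also have "\<dots> = (\<Sum>j\<in>UNIV. \<integral>\<xi>. column j (F' \<xi> (axis j 1)) \<partial>P)"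
    using integral_bounded_linear[OF bounded_linear_column F'_int] by simp
  also have "\<dots> = (\<integral>\<xi>. (\<Sum>j\<in>UNIV. column j (F' \<xi> (axis j 1))) \<partial>P)"
    by (rule Bochner_Integration.integral_sum[symmetric])
       (rule integrable_bounded_linear[OF bounded_linear_column F'_int])
  finally show ?thesis
    by (simp add: F'_def)
qed

lemma norm_mdiv_grad_covariance_le:
  "norm (mdiv grad_covariance x) \<le> 4 * (real CARD('n) + 1) * L1 * L2"
proof -
  define D where "D \<xi> = frechet_derivative (centred_grad \<xi>) (at x)" for \<xi>
  have "norm (mdiv grad_covariance x) \<le> (\<integral>\<xi>. norm (\<Sum>j\<in>UNIV. column j
      (outer (centred_grad \<xi> x) (D \<xi> (axis j 1)) + outer (D \<xi> (axis j 1)) (centred_grad \<xi> x))) \<partial>P)"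
    unfolding mdiv_grad_covariance D_def by (rule integral_norm_bound)
  also have "\<dots> \<le> (real CARD('n) + 1) * (2 * L2) * (2 * L1)"
  proof (rule integral_le_nonneg_const)
    fix \<xi> assume \<xi>: "\<xi> \<in> space P"
    have dD: "(centred_grad \<xi> has_derivative D \<xi>) (at x)"
      unfolding D_def by (rule has_derivative_centred_grad[OF \<xi>])
    have "norm (\<Sum>j\<in>UNIV. column j
        (outer (centred_grad \<xi> x) (D \<xi> (axis j 1)) + outer (D \<xi> (axis j 1)) (centred_grad \<xi> x)))
        \<le> (real CARD('n) + 1) * (2 * L2) * norm (centred_grad \<xi> x)"
      using has_derivative_norm_le[OF dD norm_centred_grad_diff_le[OF \<xi>]]
      by (intro norm_divergence_outer_le[OF has_derivative_linear[OF dD]]) (simp add: mult.assoc)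
    also have "\<dots> \<le> (real CARD('n) + 1) * (2 * L2) * (2 * L1)"
      using norm_centred_grad_le[OF \<xi>] lipschitz_constants_nonneg by (intro mult_left_mono) auto
    finally show "norm (\<Sum>j\<in>UNIV. column j
        (outer (centred_grad \<xi> x) (D \<xi> (axis j 1)) + outer (D \<xi> (axis j 1)) (centred_grad \<xi> x)))
        \<le> (real CARD('n) + 1) * (2 * L2) * (2 * L1)" .
  qed (use lipschitz_constants_nonneg in simp)
  also have "\<dots> = 4 * (real CARD('n) + 1) * L1 * L2"
    by (simp add: algebra_simps)
  finally show ?thesis .
qed

end

theorem lemma3:
  fixes P :: "'i measure" and V :: "'i \<Rightarrow> real^'n \<Rightarrow> real"
    and L1 L2 :: real and \<pi> :: "(real^'n) measure"
  assumes P: "prob_space P"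
    and V_int: "\<And>\<xi>. \<xi> \<in> space P \<Longrightarrow> integrable lborel (\<lambda>x. exp (- V \<xi> x))"
    and meas: "\<And>x. (\<lambda>\<xi>. log_dens (V \<xi>) x) \<in> borel_measurable P"
    and Eint: "\<And>x. integrable P (\<lambda>\<xi>. log_dens (V \<xi>) x)"
    and mu_int: "integrable lborel (\<lambda>x. exp (Elog P V x))"
    and diff1: "\<And>\<xi> x. \<xi> \<in> space P \<Longrightarrow> log_dens (V \<xi>) differentiable (at x)"
    and diff2: "\<And>\<xi> x. \<xi> \<in> space P \<Longrightarrow> grad (log_dens (V \<xi>)) differentiable (at x)"
    and lip1: "\<And>\<xi>. \<xi> \<in> space P \<Longrightarrow> lipschitz_on L1 UNIV (log_dens (V \<xi>))"
    and lip2: "\<And>\<xi>. \<xi> \<in> space P \<Longrightarrow> lipschitz_on L2 UNIV (grad (log_dens (V \<xi>)))"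
    and pi: "prob_space \<pi>" "sets \<pi> = sets borel"
  shows "(\<integral>x. tr_plus (hess (log_mu P V) x) \<partial>\<pi>) \<le> real CARD('n) * L2
    \<and> (\<forall>x. norm (mdiv (Sigma_SGD P V) x) \<le> 4 * (real CARD('n) + 1) * L1 * L2)
    \<and> (\<forall>x. lambda_max (Sigma_SGD P V x) \<le> 4 * L1\<^sup>2)"
proof -
  interpret lipschitz_gradient_family P "\<lambda>\<xi>. log_dens (V \<xi>)" L1 L2
    by (intro lipschitz_gradient_family.intro lipschitz_gradient_family_axioms.intro P)
       (use meas Eint diff1 diff2 lip1 lip2 in auto)
  have Elog: "Elog P V = mean"
    by (simp add: fun_eq_iff Elog_def mean_def)
  have "grad (log_mu P V) x = grad mean x" for x
  proof (rule grad_eqI)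
    show "(log_mu P V has_derivative (\<lambda>h. grad mean x \<bullet> h)) (at x)"
      using has_derivative_diff[OF has_derivative_mean has_derivative_const]
      by (simp add: log_mu_def[abs_def] Elog grad_mean)
  qed
  then have "hess (log_mu P V) = hess mean"
    by (simp add: fun_eq_iff hess_def)
  then have "(\<integral>x. tr_plus (hess (log_mu P V) x) \<partial>\<pi>) \<le> real CARD('n) * L2"
    using prob_space.integral_le_nonneg_const[OF pi(1) tr_plus_hess_mean_le] lipschitz_constants_nonneg
    by simp
  moreover have "Sigma_SGD P V = grad_covariance"
    by (simp add: fun_eq_iff Sigma_SGD_def grad_covariance_def centred_grad_def Elog)
  ultimately show ?thesis
    using norm_mdiv_grad_covariance_le lambda_max_grad_covariance_le by simp
qed

end
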